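(* Let $A=\sum_{j=1}^\infty E_j$, where $E_j$ are rank-one projections on a separable Hilbert space $H$ and the series converges in the strong operator topology. Let $\xi$ be a sequence whose entries consist of the entries of $\mu=\langle\mu_j\rangle_{j=1}^M$ and of $1-\lambda=\langle1-\lambda_j\rangle_{j=1}^N$ ($0\le M,N\le\infty$), where $0<\mu_j\le\frac12$ and $0<\lambda_j<\frac12$. If $\sum_{j=1}^M\mu_j=\infty$, then $\xi\in\operatorname{Adm}(A)$.
   Context: $\operatorname{Adm}(A)$ is the set of sequences $\xi\in\ell^\infty_+$ such that $A=\sum_j\xi_jP_j$ for some rank-one projections $P_j$ (series converging in the strong operator topology if infinite); admissibility is invariant under permutation of the sequence. *)

theory Defs
  imports "HOL-Analysis.Analysis"
begin

text \<open>The separable (necessarily infinite-dimensional) complex Hilbert space H is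
  modelled concretely as l2(nat) over the complex numbers: vectors are functions
  nat => complex with square-summable modulus.  Operators are functions on
  nat => complex; only their values on l2 matter.\<close>

definition l2 :: "(nat \<Rightarrow> complex) set" where
  "l2 = {x. summable (\<lambda>n. (cmod (x n))\<^sup>2)}"

definition l2_inner :: "(nat \<Rightarrow> complex) \<Rightarrow> (nat \<Rightarrow> complex) \<Rightarrow> complex" where
  "l2_inner x y = (\<Sum>n. x n * cnj (y n))"

definition l2_norm :: "(nat \<Rightarrow> complex) \<Rightarrow> real" where
  "l2_norm x = sqrt (\<Sum>n. (cmod (x n))\<^sup>2)"

definition rank_one_proj :: "((nat \<Rightarrow> complex) \<Rightarrow> (nat \<Rightarrow> complex)) \<Rightarrow> bool" where
  "rank_one_proj P \<longleftrightarrow> (\<exists>e\<in>l2. l2_norm e = 1 \<and>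
      (\<forall>x\<in>l2. P x = (\<lambda>k. l2_inner x e * e k)))"

definition sot_sums ::
  "(nat \<Rightarrow> (nat \<Rightarrow> complex) \<Rightarrow> (nat \<Rightarrow> complex)) \<Rightarrow> ((nat \<Rightarrow> complex) \<Rightarrow> (nat \<Rightarrow> complex)) \<Rightarrow> bool" where
  "sot_sums T A \<longleftrightarrow> (\<forall>x\<in>l2. A x \<in> l2 \<and>
      (\<lambda>n. l2_norm (\<lambda>k. (\<Sum>j<n. T j x k) - A x k)) \<longlonglongrightarrow> 0)"

definition Adm :: "((nat \<Rightarrow> complex) \<Rightarrow> (nat \<Rightarrow> complex)) \<Rightarrow> (nat \<Rightarrow> real) set" where
  "Adm A = {\<xi>. (\<forall>j. 0 \<le> \<xi> j) \<and> bounded (range \<xi>) \<and>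
      (\<exists>P. (\<forall>j. rank_one_proj (P j)) \<and>
           sot_sums (\<lambda>j x k. complex_of_real (\<xi> j) * P j x k) A)}"

end

theory Submission
  imports Defs
begin

(* Write E_j = e_j e_j* with unit vectors e_j. Vectors w_n with |w_n|^2 = xi_n, so that
   xi_n P_n = w_n w_n* for a rank-one projection P_n, are cut greedily out of the e_j. A carried
   vector d with |d|^2 = a < 1 holds the weight of the e_j used so far that has not yet been handed
   out. If xi_n <= a, then w_n is a multiple of d; otherwise d and the next unused e_m, multiplied by
   a phase that makes it orthogonal to d over the reals, are rotated into w_n and a new carried
   vector of weight 1 + a - xi_n. After n steps, sum_(i<n) w_i w_i* + d_n d_n* is the sum of the
   first m_n operators E_j, so the partial sums converge strongly to A as soon as <z, d_n> -> 0 for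
   every z. A step with xi_n <= 1/2 multiplies |<z, d>|^2 by at most 1 - xi_n/2, up to an error
   bounded by the Bessel increment 2 |<z, e_m>|^2; as these entries have divergent sum,
   <z, d_n> -> 0. *)

definition l2_normsq :: "(nat \<Rightarrow> complex) \<Rightarrow> real" where
  "l2_normsq x = (\<Sum>n. (cmod (x n))\<^sup>2)"

definition rank_one_op :: "(nat \<Rightarrow> complex) \<Rightarrow> (nat \<Rightarrow> complex) \<Rightarrow> (nat \<Rightarrow> complex)" where
  "rank_one_op w x = (\<lambda>k. l2_inner x w * w k)"

lemma l2_norm_eq_sqrt_normsq: "l2_norm x = sqrt (l2_normsq x)"
  by (simp add: l2_norm_def l2_normsq_def)

lemma l2_summable: "x \<in> l2 \<Longrightarrow> summable (\<lambda>n. (cmod (x n))\<^sup>2)"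
  by (simp add: l2_def)

lemma l2_normsq_nonneg: "x \<in> l2 \<Longrightarrow> 0 \<le> l2_normsq x"
  unfolding l2_normsq_def by (intro suminf_nonneg) (auto simp: l2_def)

lemma l2_norm_nonneg: "x \<in> l2 \<Longrightarrow> 0 \<le> l2_norm x"
  by (simp add: l2_norm_eq_sqrt_normsq l2_normsq_nonneg)

lemma l2_normsq_eq_square: "x \<in> l2 \<Longrightarrow> l2_normsq x = (l2_norm x)\<^sup>2"
  by (simp add: l2_norm_eq_sqrt_normsq l2_normsq_nonneg)

lemma l2_zero [simp]: "(\<lambda>k. 0) \<in> l2"
  by (simp add: l2_def)

lemma l2_scale: "x \<in> l2 \<Longrightarrow> (\<lambda>k. c * x k) \<in> l2"
  unfolding l2_def by (simp add: norm_mult power_mult_distrib summable_mult)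

lemma l2_add:
  assumes "x \<in> l2" "y \<in> l2"
  shows "(\<lambda>k. x k + y k) \<in> l2"
proof -
  have "(cmod (x k + y k))\<^sup>2 \<le> 2 * (cmod (x k))\<^sup>2 + 2 * (cmod (y k))\<^sup>2" for k
  proof -
    have "(cmod (x k + y k))\<^sup>2 \<le> (cmod (x k) + cmod (y k))\<^sup>2"
      by (simp add: norm_triangle_ineq power_mono)
    also have "\<dots> \<le> 2 * (cmod (x k))\<^sup>2 + 2 * (cmod (y k))\<^sup>2"
      using sum_squares_bound[of "cmod (x k)" "cmod (y k)"] by (simp add: power2_sum)
    finally show ?thesis .
  qed
  moreover have "summable (\<lambda>k. 2 * (cmod (x k))\<^sup>2 + 2 * (cmod (y k))\<^sup>2)"
    using assms by (intro summable_add summable_mult) (auto simp: l2_def)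
  ultimately show ?thesis
    unfolding l2_def by (auto intro: summable_comparison_test'[where N=0])
qed

lemma l2_diff: "x \<in> l2 \<Longrightarrow> y \<in> l2 \<Longrightarrow> (\<lambda>k. x k - y k) \<in> l2"
  using l2_add[of x "\<lambda>k. (-1) * y k"] l2_scale[of y "-1"] by simp

lemma l2_sum: "finite S \<Longrightarrow> (\<And>j. j \<in> S \<Longrightarrow> f j \<in> l2) \<Longrightarrow> (\<lambda>k. \<Sum>j\<in>S. f j k) \<in> l2"
proof (induction S rule: finite_induct)
  case (insert a S)
  then show ?case using l2_add[of "f a" "\<lambda>k. \<Sum>j\<in>S. f j k"] by simp
qed simp

lemma rank_one_op_mem_l2: "w \<in> l2 \<Longrightarrow> rank_one_op w x \<in> l2"
  unfolding rank_one_op_def by (rule l2_scale)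

lemma l2_abs_inner_summable:
  assumes "x \<in> l2" "y \<in> l2"
  shows "summable (\<lambda>k. cmod (x k) * cmod (y k))"
proof -
  have "cmod (x k) * cmod (y k) \<le> (cmod (x k))\<^sup>2 + (cmod (y k))\<^sup>2" for k
    using sum_squares_bound[of "cmod (x k)" "cmod (y k)"]
      mult_nonneg_nonneg[OF norm_ge_zero norm_ge_zero, of "x k" "y k"] by linarith
  moreover have "summable (\<lambda>k. (cmod (x k))\<^sup>2 + (cmod (y k))\<^sup>2)"
    using assms by (intro summable_add) (auto simp: l2_def)
  ultimately show ?thesis by (auto intro: summable_comparison_test'[where N=0])
qed

lemma l2_inner_summable: "x \<in> l2 \<Longrightarrow> y \<in> l2 \<Longrightarrow> summable (\<lambda>k. x k * cnj (y k))"
  by (rule summable_norm_cancel) (use l2_abs_inner_summable in \<open>simp add: norm_mult\<close>)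

lemma l2_inner_add_left:
  "x \<in> l2 \<Longrightarrow> y \<in> l2 \<Longrightarrow> z \<in> l2 \<Longrightarrow>
    l2_inner (\<lambda>k. x k + y k) z = l2_inner x z + l2_inner y z"
  unfolding l2_inner_def by (simp add: distrib_right suminf_add l2_inner_summable)

lemma l2_inner_scale_left:
  "x \<in> l2 \<Longrightarrow> z \<in> l2 \<Longrightarrow> l2_inner (\<lambda>k. c * x k) z = c * l2_inner x z"
  unfolding l2_inner_def by (simp add: mult.assoc suminf_mult l2_inner_summable)

lemma l2_inner_diff_left:
  "x \<in> l2 \<Longrightarrow> y \<in> l2 \<Longrightarrow> z \<in> l2 \<Longrightarrow>
    l2_inner (\<lambda>k. x k - y k) z = l2_inner x z - l2_inner y z"
  using l2_inner_add_left[of x "\<lambda>k. (-1) * y k" z] l2_inner_scale_left[of y z "-1"]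
    l2_scale[of y "-1"] by simp

lemma l2_inner_sum_left:
  assumes "finite S" "\<And>j. j \<in> S \<Longrightarrow> f j \<in> l2" "z \<in> l2"
  shows "l2_inner (\<lambda>k. \<Sum>j\<in>S. f j k) z = (\<Sum>j\<in>S. l2_inner (f j) z)"
  using assms(1,2)
proof (induction S rule: finite_induct)
  case empty
  then show ?case by (simp add: l2_inner_def)
next
  case (insert a S)
  then show ?case
    using l2_inner_add_left[of "f a" "\<lambda>k. \<Sum>j\<in>S. f j k" z] assms(3) l2_sum[of S f] by simp
qed

lemma l2_inner_commute:
  assumes "x \<in> l2" "y \<in> l2"
  shows "l2_inner y x = cnj (l2_inner x y)"
proof -
  have "(\<lambda>k. cnj (x k * cnj (y k))) sums cnj (l2_inner x y)"
    unfolding l2_inner_def sums_cnj by (intro summable_sums l2_inner_summable assms)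
  then show ?thesis
    unfolding l2_inner_def by (simp add: sums_iff mult.commute)
qed

lemma l2_inner_add_right:
  "x \<in> l2 \<Longrightarrow> y \<in> l2 \<Longrightarrow> z \<in> l2 \<Longrightarrow>
    l2_inner z (\<lambda>k. x k + y k) = l2_inner z x + l2_inner z y"
  using l2_inner_commute[of "\<lambda>k. x k + y k" z] l2_inner_commute[of x z] l2_inner_commute[of y z]
  by (simp add: l2_add l2_inner_add_left)

lemma l2_inner_scale_right:
  "x \<in> l2 \<Longrightarrow> z \<in> l2 \<Longrightarrow> l2_inner z (\<lambda>k. c * x k) = cnj c * l2_inner z x"
  using l2_inner_commute[of "\<lambda>k. c * x k" z] l2_inner_commute[of x z]
  by (simp add: l2_scale l2_inner_scale_left)

lemma l2_inner_self: "x \<in> l2 \<Longrightarrow> l2_inner x x = of_real (l2_normsq x)"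
  unfolding l2_inner_def l2_normsq_def
  by (simp add: complex_norm_square[symmetric] suminf_of_real l2_summable)

lemma l2_normsq_add:
  assumes "x \<in> l2" "y \<in> l2"
  shows "l2_normsq (\<lambda>k. x k + y k) = l2_normsq x + l2_normsq y + 2 * Re (l2_inner x y)"
proof -
  have "of_real (l2_normsq (\<lambda>k. x k + y k)) = l2_inner (\<lambda>k. x k + y k) (\<lambda>k. x k + y k)"
    using assms by (simp add: l2_add l2_inner_self)
  also have "\<dots> = of_real (l2_normsq x) + of_real (l2_normsq y) + l2_inner x y + l2_inner y x"
    using assms by (simp add: l2_add l2_inner_add_left l2_inner_add_right l2_inner_self)
  finally show ?thesis
    using l2_inner_commute[OF assms] by (simp add: complex_eq_iff)
qed

lemma l2_normsq_scale: "x \<in> l2 \<Longrightarrow> l2_normsq (\<lambda>k. c * x k) = (cmod c)\<^sup>2 * l2_normsq x"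
  unfolding l2_normsq_def by (simp add: norm_mult power_mult_distrib suminf_mult l2_summable)

lemma l2_norm_scale: "x \<in> l2 \<Longrightarrow> l2_norm (\<lambda>k. c * x k) = cmod c * l2_norm x"
  by (simp add: l2_norm_eq_sqrt_normsq l2_normsq_scale real_sqrt_mult)

lemma l2_cauchy_schwarz:
  assumes "x \<in> l2" "y \<in> l2"
  shows "cmod (l2_inner x y) \<le> l2_norm x * l2_norm y"
proof -
  have partial: "L2_set (\<lambda>k. cmod (x k)) {..<n} \<le> l2_norm x" if "x \<in> l2" for x n
    unfolding L2_set_def l2_norm_def
    by (rule real_sqrt_le_mono, rule sum_le_suminf) (use that in \<open>auto simp: l2_def\<close>)
  have "cmod (l2_inner x y) \<le> (\<Sum>k. cmod (x k) * cmod (y k))"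
    unfolding l2_inner_def using summable_norm[of "\<lambda>k. x k * cnj (y k)"]
    by (simp add: norm_mult l2_abs_inner_summable assms)
  also have "\<dots> \<le> l2_norm x * l2_norm y"
  proof (rule suminf_le_const[OF l2_abs_inner_summable[OF assms]])
    fix n
    have "(\<Sum>k<n. cmod (x k) * cmod (y k))
        \<le> L2_set (\<lambda>k. cmod (x k)) {..<n} * L2_set (\<lambda>k. cmod (y k)) {..<n}"
      using L2_set_mult_ineq[of "\<lambda>k. cmod (x k)" "\<lambda>k. cmod (y k)" "{..<n}"] by simp
    also have "\<dots> \<le> l2_norm x * l2_norm y"
      by (intro mult_mono partial assms l2_norm_nonneg) (auto simp: L2_set_def intro: sum_nonneg)
    finally show "(\<Sum>k<n. cmod (x k) * cmod (y k)) \<le> l2_norm x * l2_norm y" .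
  qed
  finally show ?thesis .
qed

lemma l2_norm_triangle:
  assumes "x \<in> l2" "y \<in> l2"
  shows "l2_norm (\<lambda>k. x k + y k) \<le> l2_norm x + l2_norm y"
proof -
  have "l2_normsq (\<lambda>k. x k + y k) \<le> l2_normsq x + l2_normsq y + 2 * (l2_norm x * l2_norm y)"
    using l2_normsq_add[OF assms] l2_cauchy_schwarz[OF assms]
      complex_Re_le_cmod[of "l2_inner x y"] by linarith
  also have "\<dots> = (l2_norm x + l2_norm y)\<^sup>2"
    using assms by (simp add: l2_normsq_eq_square power2_sum)
  finally have "sqrt (l2_normsq (\<lambda>k. x k + y k)) \<le> sqrt ((l2_norm x + l2_norm y)\<^sup>2)"
    by (rule real_sqrt_le_mono)
  then show ?thesis
    using assms by (simp add: l2_norm_eq_sqrt_normsq[of "\<lambda>k. x k + y k"] l2_norm_nonneg)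
qed

lemma l2_norm_triangle_diff:
  "x \<in> l2 \<Longrightarrow> y \<in> l2 \<Longrightarrow> l2_norm (\<lambda>k. x k - y k) \<le> l2_norm x + l2_norm y"
  using l2_norm_triangle[of x "\<lambda>k. (-1) * y k"] l2_scale[of y "-1"] l2_norm_scale[of y "-1"]
  by simp

section \<open>Cutting and rotating vectors\<close>

definition perp_phase :: "complex \<Rightarrow> complex" where
  "perp_phase p = (if p = 0 then 1 else \<i> * sgn p)"

lemma norm_perp_phase [simp]: "cmod (perp_phase p) = 1"
  by (simp add: perp_phase_def norm_mult norm_sgn)

lemma Re_cnj_perp_phase_mult: "Re (cnj (perp_phase p) * p) = 0"
proof (cases "p = 0")
  case False
  have "cnj (perp_phase p) * p = - \<i> * (cnj p * p) / of_real (cmod p)"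
    using False by (simp add: perp_phase_def sgn_div_norm scaleR_conv_of_real field_simps)
  also have "cnj p * p = of_real ((cmod p)\<^sup>2)"
    by (simp only: complex_norm_square mult.commute)
  finally show ?thesis by simp
qed (simp add: perp_phase_def)

lemma rank_one_op_unimodular_scale:
  assumes "cmod \<omega> = 1" "u \<in> l2" "x \<in> l2"
  shows "rank_one_op (\<lambda>k. \<omega> * u k) x = rank_one_op u x"
proof -
  have "cnj \<omega> * \<omega> = 1"
    using complex_norm_square[of \<omega>] assms(1) by (simp add: mult.commute)
  then show ?thesis
    unfolding rank_one_op_def using assms(2,3)
    by (simp add: l2_inner_scale_right fun_eq_iff algebra_simps)
qed

lemma split_vector:
  assumes d: "d \<in> l2" "l2_normsq d = a" and t: "0 < t" "t \<le> a" and "a \<le> 1"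
  defines "w \<equiv> \<lambda>k. of_real (sqrt (t / a)) * d k"
    and "d' \<equiv> \<lambda>k. of_real (sqrt ((a - t) / a)) * d k"
  shows "w \<in> l2" "d' \<in> l2" "l2_normsq w = t" "l2_normsq d' = a - t"
    and "x \<in> l2 \<Longrightarrow> rank_one_op w x k + rank_one_op d' x k = rank_one_op d x k"
    and "x \<in> l2 \<Longrightarrow> (cmod (l2_inner x d'))\<^sup>2 \<le> (1 - t) * (cmod (l2_inner x d))\<^sup>2"
proof -
  have a: "0 < a" using t by simp
  show "w \<in> l2" "d' \<in> l2" unfolding w_def d'_def using d(1) by (auto intro: l2_scale)
  show "l2_normsq w = t" "l2_normsq d' = a - t"
    unfolding w_def d'_def using d a t by (simp_all add: l2_normsq_scale)
  assume x: "x \<in> l2"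
  have "t * a \<le> t"
    using \<open>a \<le> 1\<close> t by (simp add: mult_left_le)
  then have factor: "(a - t) / a \<le> 1 - t"
    using a by (simp add: field_simps)
  have "(cmod (l2_inner x d'))\<^sup>2 = (a - t) / a * (cmod (l2_inner x d))\<^sup>2"
    unfolding d'_def using d a t x by (simp add: l2_inner_scale_right norm_mult power_mult_distrib)
  also have "\<dots> \<le> (1 - t) * (cmod (l2_inner x d))\<^sup>2"
    using factor by (rule mult_right_mono) simp
  finally show "(cmod (l2_inner x d'))\<^sup>2 \<le> (1 - t) * (cmod (l2_inner x d))\<^sup>2" .
  have "l2_inner x w = of_real (sqrt (t / a)) * l2_inner x d"
    "l2_inner x d' = of_real (sqrt ((a - t) / a)) * l2_inner x d"
    unfolding w_def d'_def using d(1) x by (simp_all add: l2_inner_scale_right)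
  moreover have "of_real (sqrt (t / a)) * of_real (sqrt (t / a))
      + of_real (sqrt ((a - t) / a)) * of_real (sqrt ((a - t) / a)) = (1 :: complex)"
    using a t by (simp flip: of_real_mult of_real_add add: add_divide_distrib[symmetric])
  ultimately show "rank_one_op w x k + rank_one_op d' x k = rank_one_op d x k"
    unfolding rank_one_op_def w_def d'_def
    by (simp add: algebra_simps) (metis distrib_left mult.right_neutral)
qed

lemma sq_cos_sin_combination_le:
  fixes s c X Y :: real
  assumes "0 \<le> s" "0 \<le> c" "c\<^sup>2 + s\<^sup>2 = 1" "0 \<le> X" "0 \<le> Y"
  shows "(s * X + c * Y)\<^sup>2 \<le> s * X\<^sup>2 + 2 * Y\<^sup>2"
proof (cases "s = 1")
  case True
  then show ?thesis using assms by (simp add: power2_eq_square)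
next
  case False
  have "s \<le> 1" using assms(1,3) by (metis abs_of_nonneg abs_square_le_1 le_add_same_cancel2 zero_le_power2)
  with False have "s < 1" by simp
  \<comment> \<open>convexity of the square for the weights \<open>s\<close>, \<open>1 - s\<close>, and \<open>c\<^sup>2 = (1 - s) * (1 + s)\<close>\<close>
  have "(1 - s) * (s * X\<^sup>2 + 2 * Y\<^sup>2 - (s * X + c * Y)\<^sup>2)
      = s * ((1 - s) * X - c * Y)\<^sup>2 + (1 - s)\<^sup>2 * Y\<^sup>2 + (1 - c\<^sup>2 - s\<^sup>2) * Y\<^sup>2"
    by (simp add: power2_eq_square algebra_simps)
  also have "\<dots> \<ge> 0" using assms by simp
  finally show ?thesis using \<open>s < 1\<close> by (simp add: zero_le_mult_iff)
qed

lemma rotate_pair: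
  assumes d: "d \<in> l2" and u: "u \<in> l2" "l2_normsq u = 1" "Re (l2_inner d u) = 0"
    and cs: "0 \<le> c" "0 \<le> s" "c\<^sup>2 + s\<^sup>2 = 1"
  defines "w \<equiv> \<lambda>k. of_real c * d k + of_real s * u k"
    and "d' \<equiv> \<lambda>k. of_real (- s) * d k + of_real c * u k"
  shows "w \<in> l2" "d' \<in> l2"
    and "l2_normsq w = c\<^sup>2 * l2_normsq d + s\<^sup>2" "l2_normsq d' = s\<^sup>2 * l2_normsq d + c\<^sup>2"
    and "x \<in> l2 \<Longrightarrow> rank_one_op w x k + rank_one_op d' x k = rank_one_op d x k + rank_one_op u x k"
    and "x \<in> l2 \<Longrightarrow> (cmod (l2_inner x d'))\<^sup>2 \<le> s * (cmod (l2_inner x d))\<^sup>2 + 2 * (cmod (l2_inner x u))\<^sup>2"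
proof -
  have scaled: "(\<lambda>k. of_real r * d k) \<in> l2" "(\<lambda>k. of_real r * u k) \<in> l2" for r
    using d u by (auto intro: l2_scale)
  show "w \<in> l2" "d' \<in> l2" unfolding w_def d'_def by (intro l2_add scaled)+
  have cross: "Re (l2_inner (\<lambda>k. of_real r * d k) (\<lambda>k. of_real r' * u k)) = 0" for r r'
    using d u by (simp add: l2_inner_scale_left[OF d scaled(2)] l2_inner_scale_right)
  show "l2_normsq w = c\<^sup>2 * l2_normsq d + s\<^sup>2" "l2_normsq d' = s\<^sup>2 * l2_normsq d + c\<^sup>2"
    unfolding w_def d'_def l2_normsq_add[OF scaled(1) scaled(2)] cross
    using d u by (simp_all only: l2_normsq_scale norm_of_real) simp_all
  assume x: "x \<in> l2"
  have iw: "l2_inner x w = of_real c * l2_inner x d + of_real s * l2_inner x u"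
    and id': "l2_inner x d' = of_real (- s) * l2_inner x d + of_real c * l2_inner x u"
    unfolding w_def d'_def l2_inner_add_right[OF scaled(1) scaled(2) x]
    by (simp_all only: l2_inner_scale_right[OF d x] l2_inner_scale_right[OF u(1) x]
        complex_cnj_complex_of_real)
  have rotation: "(C * p + S * q) * (C * a + S * b) + (- S * p + C * q) * (- S * a + C * b)
      = (C * C + S * S) * (p * a + q * b)" for C S p q a b :: complex
    by algebra
  have "of_real c * of_real c + of_real s * of_real s = (1 :: complex)"
    using cs(3) by (metis of_real_1 of_real_add of_real_mult power2_eq_square)
  then show "rank_one_op w x k + rank_one_op d' x k = rank_one_op d x k + rank_one_op u x k"
    unfolding rank_one_op_def iw id' unfolding w_def d'_def of_real_minus rotation by simp
  have "cmod (l2_inner x d') \<le> s * cmod (l2_inner x d) + c * cmod (l2_inner x u)"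
    unfolding id' using cs norm_triangle_ineq[of "of_real (- s) * l2_inner x d" "of_real c * l2_inner x u"]
    by (simp add: norm_mult)
  then have "(cmod (l2_inner x d'))\<^sup>2 \<le> (s * cmod (l2_inner x d) + c * cmod (l2_inner x u))\<^sup>2"
    by (simp add: power_mono)
  also have "\<dots> \<le> s * (cmod (l2_inner x d))\<^sup>2 + 2 * (cmod (l2_inner x u))\<^sup>2"
    using cs by (intro sq_cos_sin_combination_le) auto
  finally show "(cmod (l2_inner x d'))\<^sup>2 \<le> s * (cmod (l2_inner x d))\<^sup>2 + 2 * (cmod (l2_inner x u))\<^sup>2" .
qed

lemma rotate_against_unit:
  assumes d: "d \<in> l2" "l2_normsq d = a" "0 \<le> a" and t: "a < t" "t \<le> 1"
    and v: "v \<in> l2" "l2_normsq v = 1"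
  defines "u \<equiv> \<lambda>k. perp_phase (l2_inner d v) * v k"
    and "c \<equiv> sqrt ((1 - t) / (1 - a))" and "s \<equiv> sqrt ((t - a) / (1 - a))"
  defines "w \<equiv> \<lambda>k. of_real c * d k + of_real s * u k"
    and "d' \<equiv> \<lambda>k. of_real (- s) * d k + of_real c * u k"
  shows "w \<in> l2" "d' \<in> l2" "l2_normsq w = t" "l2_normsq d' = 1 + a - t"
    and "x \<in> l2 \<Longrightarrow> rank_one_op w x k + rank_one_op d' x k = rank_one_op d x k + rank_one_op v x k"
    and "x \<in> l2 \<Longrightarrow> (cmod (l2_inner x d'))\<^sup>2 \<le> sqrt t * (cmod (l2_inner x d))\<^sup>2 + 2 * (cmod (l2_inner x v))\<^sup>2"
proof -
  have u: "u \<in> l2" "l2_normsq u = 1" "Re (l2_inner d u) = 0"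
    unfolding u_def l2_inner_scale_right[OF v(1) d(1)] Re_cnj_perp_phase_mult
    using v by (simp_all add: l2_scale l2_normsq_scale)
  have c2: "c\<^sup>2 = (1 - t) / (1 - a)" and s2: "s\<^sup>2 = (t - a) / (1 - a)"
    unfolding c_def s_def using d t by (simp_all add: divide_nonneg_pos)
  have cs: "0 \<le> c" "0 \<le> s" "c\<^sup>2 + s\<^sup>2 = 1"
    unfolding c2 s2 using d t by (auto simp: c_def s_def add_divide_distrib[symmetric])
  note rot = rotate_pair[OF d(1) u cs, folded w_def d'_def]
  show "w \<in> l2" "d' \<in> l2" by (fact rot(1,2))+
  show "l2_normsq w = t" "l2_normsq d' = 1 + a - t"
    unfolding rot(3,4) c2 s2 d(2) using d t by (simp_all add: field_simps add_divide_distrib[symmetric])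
  assume x: "x \<in> l2"
  show "rank_one_op w x k + rank_one_op d' x k = rank_one_op d x k + rank_one_op v x k"
    unfolding rot(5)[OF x] u_def using v x by (simp add: rank_one_op_unimodular_scale)
  have "s \<le> sqrt t"
    unfolding s_def using d t by (intro real_sqrt_le_mono) (simp add: field_simps mult_left_le)
  then have "s * (cmod (l2_inner x d))\<^sup>2 \<le> sqrt t * (cmod (l2_inner x d))\<^sup>2"
    by (intro mult_right_mono) auto
  moreover have "cmod (l2_inner x u) = cmod (l2_inner x v)"
    unfolding u_def using v x by (simp add: l2_inner_scale_right norm_mult)
  ultimately show "(cmod (l2_inner x d'))\<^sup>2 \<le> sqrt t * (cmod (l2_inner x d))\<^sup>2 + 2 * (cmod (l2_inner x v))\<^sup>2"
    using rot(6)[OF x] by simp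
qed

section \<open>Perturbed contractions and divergent series\<close>

lemma perturbed_contraction_bound:
  fixes v c B :: "nat \<Rightarrow> real"
  assumes rec: "\<And>n. v (Suc n) \<le> (1 - c n) * v n + (B (Suc n) - B n)"
    and v: "\<And>n. 0 \<le> v n" and c: "\<And>n. 0 \<le> c n" "\<And>n. c n \<le> 1" and B: "incseq B"
  shows "v (K + t) \<le> v K * exp (- ((\<Sum>i<K + t. c i) - (\<Sum>i<K. c i))) + (B (K + t) - B K)"
proof (induction t)
  case 0
  then show ?case by simp
next
  case (Suc t)
  let ?n = "K + t" and ?X = "v K * exp (- ((\<Sum>i<K + t. c i) - (\<Sum>i<K. c i)))"
  have "v (Suc ?n) \<le> (1 - c ?n) * (?X + (B ?n - B K)) + (B (Suc ?n) - B ?n)"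
    using rec[of ?n] Suc.IH c[of ?n] by (smt (verit) mult_left_mono)
  also have "\<dots> \<le> exp (- c ?n) * ?X + (B ?n - B K) + (B (Suc ?n) - B ?n)"
  proof -
    have "(1 - c ?n) * ?X \<le> exp (- c ?n) * ?X"
      using exp_ge_add_one_self[of "- c ?n"] v[of K] by (intro mult_right_mono) simp_all
    moreover have "(1 - c ?n) * (B ?n - B K) \<le> B ?n - B K"
      using c[of ?n] B by (simp add: incseq_def mult_left_le_one_le)
    ultimately show ?thesis by (simp add: distrib_left)
  qed
  also have "exp (- c ?n) * ?X = v K * exp (- ((\<Sum>i<K + Suc t. c i) - (\<Sum>i<K. c i)))"
    by (simp add: mult.left_commute exp_add[symmetric])
  finally show ?case by simp
qed

lemma tendsto_zero_of_perturbed_contraction: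
  fixes v c B :: "nat \<Rightarrow> real"
  assumes rec: "\<And>n. v (Suc n) \<le> (1 - c n) * v n + (B (Suc n) - B n)"
    and v: "\<And>n. 0 \<le> v n" and c: "\<And>n. 0 \<le> c n" "\<And>n. c n \<le> 1"
    and B: "incseq B" "convergent B"
    and diverge: "filterlim (\<lambda>n. \<Sum>i<n. c i) at_top sequentially"
  shows "v \<longlonglongrightarrow> 0"
proof (rule LIMSEQ_I)
  fix r :: real
  assume "0 < r"
  then obtain K where K: "\<And>m n. K \<le> m \<Longrightarrow> K \<le> n \<Longrightarrow> norm (B m - B n) < r / 2"
    using B(2) by (metis Cauchy_def convergent_Cauchy dist_real_def half_gt_zero real_norm_def)
  have "filterlim (\<lambda>n. (\<Sum>i<n. c i) - (\<Sum>i<K. c i)) at_top sequentially"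
    using filterlim_tendsto_add_at_top[OF tendsto_const diverge, of "- (\<Sum>i<K. c i)"] by simp
  then have "((\<lambda>n. v K * exp (- ((\<Sum>i<n. c i) - (\<Sum>i<K. c i)))) \<longlongrightarrow> v K * 0) sequentially"
    by (intro tendsto_mult tendsto_const filterlim_compose[OF exp_at_bot])
      (simp add: filterlim_uminus_at_bot)
  then have "eventually (\<lambda>n. v K * exp (- ((\<Sum>i<n. c i) - (\<Sum>i<K. c i))) < r / 2) sequentially"
    using \<open>0 < r\<close> by (intro order_tendstoD(2)) auto
  then obtain N where N: "\<And>n. N \<le> n \<Longrightarrow> v K * exp (- ((\<Sum>i<n. c i) - (\<Sum>i<K. c i))) < r / 2"
    by (auto simp: eventually_sequentially)
  show "\<exists>n0. \<forall>n\<ge>n0. norm (v n - 0) < r"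
  proof (intro exI allI impI)
    fix n
    assume n: "max N K \<le> n"
    then obtain t where t: "n = K + t"
      by (metis le_add_diff_inverse max.bounded_iff)
    have "v n \<le> v K * exp (- ((\<Sum>i<n. c i) - (\<Sum>i<K. c i))) + (B n - B K)"
      using perturbed_contraction_bound[OF rec v c B(1)] t by simp
    also have "\<dots> < r / 2 + r / 2"
      using N[of n] K[of n K] n abs_ge_self[of "B n - B K"] by (intro add_strict_mono) auto
    finally show "norm (v n - 0) < r"
      using v[of n] by simp
  qed
qed

lemma partial_sums_at_top_if_ennreal_infsum_infinite:
  fixes f :: "nat \<Rightarrow> real"
  assumes f: "\<And>n. 0 \<le> f n" and infinite: "(\<Sum>\<^sub>\<infinity>n. ennreal (f n)) = \<infinity>"
  shows "filterlim (\<lambda>n. \<Sum>i<n. f i) at_top sequentially"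
  unfolding filterlim_at_top
proof
  fix Z
  show "eventually (\<lambda>n. Z \<le> (\<Sum>i<n. f i)) sequentially"
  proof (rule ccontr)
    assume not_eventually: "\<not> eventually (\<lambda>n. Z \<le> (\<Sum>i<n. f i)) sequentially"
    have below: "(\<Sum>i<n. f i) < Z" for n
    proof (rule ccontr)
      assume "\<not> (\<Sum>i<n. f i) < Z"
      then have "Z \<le> (\<Sum>i<m. f i)" if "n \<le> m" for m
        using that f by (smt (verit) lessThan_subset_iff sum_mono2 finite_lessThan)
      then show False
        using not_eventually by (auto simp: eventually_sequentially)
    qed
    have "sum (\<lambda>n. ennreal (f n)) F \<le> ennreal Z" if "finite F" for F
    proof -
      obtain k where "F \<subseteq> {..<k}"
        using \<open>finite F\<close> finite_nat_iff_bounded by auto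
      then have "sum f F \<le> Z"
        using below[of k] f by (smt (verit) finite_lessThan sum_mono2)
      then show ?thesis
        using f by (simp add: sum_ennreal ennreal_leI)
    qed
    then have "(\<Sum>\<^sub>\<infinity>n. ennreal (f n)) \<le> ennreal Z"
      by (subst nonneg_infsum_complete) (auto intro: SUP_least)
    then show False
      using infinite by (simp add: top_unique)
  qed
qed

lemma infsum_case_sum_Inl:
  fixes f :: "'a \<Rightarrow> 'c :: {comm_monoid_add, t2_space}"
  assumes \<sigma>: "bij_betw \<sigma> UNIV (S <+> T)"
  shows "(\<Sum>\<^sub>\<infinity>n. case \<sigma> n of Inl j \<Rightarrow> f j | Inr _ \<Rightarrow> 0) = (\<Sum>\<^sub>\<infinity>j\<in>S. f j)"
proof -
  define L where "L = {n. \<sigma> n \<in> Inl ` S}"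
  have mem: "\<sigma> n \<in> S <+> T" for n
    using \<sigma> by (auto simp: bij_betw_def)
  have "(\<Sum>\<^sub>\<infinity>n. case \<sigma> n of Inl j \<Rightarrow> f j | Inr _ \<Rightarrow> 0) = (\<Sum>\<^sub>\<infinity>n\<in>L. f (projl (\<sigma> n)))"
  proof (rule infsum_cong_neutral)
    show "(case \<sigma> n of Inl j \<Rightarrow> f j | Inr _ \<Rightarrow> 0) = 0" if "n \<in> UNIV - L" for n
      using that mem[of n] by (auto simp: L_def)
    show "(case \<sigma> n of Inl j \<Rightarrow> f j | Inr _ \<Rightarrow> 0) = f (projl (\<sigma> n))" if "n \<in> UNIV \<inter> L" for n
      using that by (auto simp: L_def)
  qed simp
  also have "\<dots> = (\<Sum>\<^sub>\<infinity>j\<in>S. f j)"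
  proof (rule infsum_reindex_bij_betw, rule bij_betw_imageI)
    show "inj_on (\<lambda>n. projl (\<sigma> n)) L"
      using bij_betw_imp_inj_on[OF \<sigma>] by (auto simp: L_def inj_on_def)
    have "Inl j \<in> range \<sigma>" if "j \<in> S" for j
      using that bij_betw_imp_surj_on[OF \<sigma>] by auto
    then show "(\<lambda>n. projl (\<sigma> n)) ` L = S"
      by (auto simp: L_def image_iff) (metis sum.sel(1))
  qed
  finally show ?thesis .
qed

lemma sot_sums_cong:
  "(\<And>j x. x \<in> l2 \<Longrightarrow> T j x = T' j x) \<Longrightarrow> sot_sums T A \<longleftrightarrow> sot_sums T' A"
  by (simp add: sot_sums_def)

lemma bessel_partial_sums_convergent:
  assumes e: "\<And>j. e j \<in> l2" and A: "sot_sums (\<lambda>j. rank_one_op (e j)) A" and z: "z \<in> l2"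
  shows "convergent (\<lambda>m. \<Sum>j<m. (cmod (l2_inner z (e j)))\<^sup>2)"
proof -
  define S where "S m = (\<lambda>k. \<Sum>j<m. rank_one_op (e j) z k)" for m
  have Az: "A z \<in> l2" and F: "(\<lambda>m. l2_norm (\<lambda>k. S m k - A z k)) \<longlonglongrightarrow> 0"
    using A z unfolding sot_sums_def S_def by auto
  have S: "S m \<in> l2" for m
    unfolding S_def by (intro l2_sum rank_one_op_mem_l2 e) simp
  have "l2_inner (S m) z = (\<Sum>j<m. l2_inner z (e j) * cnj (l2_inner z (e j)))" for m
    unfolding S_def rank_one_op_def
    by (simp add: l2_inner_sum_left l2_scale e z l2_inner_scale_left l2_inner_commute[OF z e])
  then have inner_S: "l2_inner (S m) z = of_real (\<Sum>j<m. (cmod (l2_inner z (e j)))\<^sup>2)" for m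
    by (simp only: of_real_sum complex_norm_square)
  have "(\<lambda>m. l2_inner (S m) z - l2_inner (A z) z) \<longlonglongrightarrow> 0"
  proof (rule Lim_null_comparison)
    show "\<forall>\<^sub>F m in sequentially. norm (l2_inner (S m) z - l2_inner (A z) z)
        \<le> l2_norm (\<lambda>k. S m k - A z k) * l2_norm z"
      using l2_cauchy_schwarz[OF l2_diff[OF S Az] z] l2_inner_diff_left[OF S Az z] by simp
    show "(\<lambda>m. l2_norm (\<lambda>k. S m k - A z k) * l2_norm z) \<longlonglongrightarrow> 0"
      using tendsto_mult_left_zero[OF F] by simp
  qed
  then have "(\<lambda>m. Re (l2_inner (S m) z)) \<longlonglongrightarrow> Re (l2_inner (A z) z)"
    by (intro tendsto_Re) (rule LIM_zero_cancel)
  then show ?thesis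
    unfolding inner_S by (auto simp: convergent_def)
qed

section \<open>The greedy decomposition\<close>

(* A state (a, m, d): the vectors e_0, ..., e_(m-1) have been used, and d, of squared norm a,
   carries the part of their weight not yet given to a piece. *)
type_synonym carry = "real \<times> nat \<times> (nat \<Rightarrow> complex)"

fun carry_step :: "(nat \<Rightarrow> nat \<Rightarrow> complex) \<Rightarrow> real \<Rightarrow> carry \<Rightarrow> carry" where
  "carry_step e t (a, m, d) =
    (if t \<le> a then (a - t, m, \<lambda>k. of_real (sqrt ((a - t) / a)) * d k)
     else (1 + a - t, Suc m,
       \<lambda>k. of_real (- sqrt ((t - a) / (1 - a))) * d k
         + of_real (sqrt ((1 - t) / (1 - a))) * (perp_phase (l2_inner d (e m)) * e m k)))"

fun carry_piece :: "(nat \<Rightarrow> nat \<Rightarrow> complex) \<Rightarrow> real \<Rightarrow> carry \<Rightarrow> (nat \<Rightarrow> complex)" where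
  "carry_piece e t (a, m, d) =
    (if t \<le> a then (\<lambda>k. of_real (sqrt (t / a)) * d k)
     else (\<lambda>k. of_real (sqrt ((1 - t) / (1 - a))) * d k
       + of_real (sqrt ((t - a) / (1 - a))) * (perp_phase (l2_inner d (e m)) * e m k)))"

primrec carry_state :: "(nat \<Rightarrow> nat \<Rightarrow> complex) \<Rightarrow> (nat \<Rightarrow> real) \<Rightarrow> nat \<Rightarrow> carry" where
  "carry_state e \<xi> 0 = (0, 0, \<lambda>k. 0)"
| "carry_state e \<xi> (Suc n) = carry_step e (\<xi> n) (carry_state e \<xi> n)"

definition carry_weight :: "(nat \<Rightarrow> nat \<Rightarrow> complex) \<Rightarrow> (nat \<Rightarrow> real) \<Rightarrow> nat \<Rightarrow> real" where
  "carry_weight e \<xi> n = fst (carry_state e \<xi> n)"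

definition carry_used :: "(nat \<Rightarrow> nat \<Rightarrow> complex) \<Rightarrow> (nat \<Rightarrow> real) \<Rightarrow> nat \<Rightarrow> nat" where
  "carry_used e \<xi> n = fst (snd (carry_state e \<xi> n))"

definition carry_vec :: "(nat \<Rightarrow> nat \<Rightarrow> complex) \<Rightarrow> (nat \<Rightarrow> real) \<Rightarrow> nat \<Rightarrow> nat \<Rightarrow> complex" where
  "carry_vec e \<xi> n = snd (snd (carry_state e \<xi> n))"

definition piece :: "(nat \<Rightarrow> nat \<Rightarrow> complex) \<Rightarrow> (nat \<Rightarrow> real) \<Rightarrow> nat \<Rightarrow> nat \<Rightarrow> complex" where
  "piece e \<xi> n = carry_piece e (\<xi> n) (carry_state e \<xi> n)"

lemma carry_state_eq: "carry_state e \<xi> n = (carry_weight e \<xi> n, carry_used e \<xi> n, carry_vec e \<xi> n)"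
  by (simp add: carry_weight_def carry_used_def carry_vec_def)

lemma contraction_factor_le:
  assumes "0 \<le> t" "t \<le> 1"
  shows "max (1 - t) (sqrt t) \<le> 1 - (if t \<le> 1/2 then t else 0) / 2"
proof (cases "t \<le> 1/2")
  case True
  have "(1 - t / 2)\<^sup>2 = t + (1 - 2 * t) + t\<^sup>2 / 4"
    by (simp add: power2_eq_square algebra_simps)
  then have "t \<le> (1 - t / 2)\<^sup>2"
    using True zero_le_power2[of t] by linarith
  then have "sqrt t \<le> 1 - t / 2"
    using True by (intro real_le_lsqrt) simp_all
  then show ?thesis using True assms by simp
qed (use assms in simp)

definition small_part :: "(nat \<Rightarrow> real) \<Rightarrow> nat \<Rightarrow> real" where
  "small_part \<xi> n = (if \<xi> n \<le> 1/2 then \<xi> n else 0)"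

context
  fixes e :: "nat \<Rightarrow> nat \<Rightarrow> complex"
  assumes e: "\<And>j. e j \<in> l2" "\<And>j. l2_normsq (e j) = 1"
begin

lemma carry_step_properties:
  assumes t: "0 < t" "t \<le> 1" and a: "0 \<le> a" "a < 1" and d: "d \<in> l2" "l2_normsq d = a"
    and step: "carry_step e t (a, m, d) = (a', m', d')"
    and w: "carry_piece e t (a, m, d) = w"
  shows "m' = m \<and> a' = a - t \<or> m' = Suc m \<and> a' = 1 + a - t"
    and "0 \<le> a'" "a' < 1" "d' \<in> l2" "l2_normsq d' = a'" "w \<in> l2" "l2_normsq w = t"
    and "x \<in> l2 \<Longrightarrow> rank_one_op w x k + rank_one_op d' x k
           = rank_one_op d x k + (\<Sum>j\<in>{m..<m'}. rank_one_op (e j) x k)"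
    and "x \<in> l2 \<Longrightarrow> (cmod (l2_inner x d'))\<^sup>2
           \<le> max (1 - t) (sqrt t) * (cmod (l2_inner x d))\<^sup>2 + 2 * (\<Sum>j\<in>{m..<m'}. (cmod (l2_inner x (e j)))\<^sup>2)"
proof -
  have "(m' = m \<and> a' = a - t \<or> m' = Suc m \<and> a' = 1 + a - t) \<and>
    0 \<le> a' \<and> a' < 1 \<and> d' \<in> l2 \<and> l2_normsq d' = a' \<and> w \<in> l2 \<and> l2_normsq w = t \<and>
    (\<forall>x\<in>l2. \<forall>k. rank_one_op w x k + rank_one_op d' x k
           = rank_one_op d x k + (\<Sum>j\<in>{m..<m'}. rank_one_op (e j) x k)) \<and>
    (\<forall>x\<in>l2. (cmod (l2_inner x d'))\<^sup>2
           \<le> max (1 - t) (sqrt t) * (cmod (l2_inner x d))\<^sup>2 + 2 * (\<Sum>j\<in>{m..<m'}. (cmod (l2_inner x (e j)))\<^sup>2))"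
  proof (cases "t \<le> a")
    case True
    note split = split_vector[OF d t(1) True less_imp_le[OF a(2)]]
    note decay = order_trans[OF split(6) mult_right_mono[OF max.cobounded1 zero_le_power2]]
    show ?thesis
      using step w split(1-5) decay True t a by auto
  next
    case False
    then have "a < t" by simp
    note rot = rotate_against_unit[OF d a(1) this t(2) e(1)[of m] e(2)[of m]]
    note decay = order_trans[OF rot(6) add_right_mono[OF mult_right_mono[OF max.cobounded2 zero_le_power2]]]
    show ?thesis
      using step w rot(1-5) decay \<open>a < t\<close> t a by auto
  qed
  then show "m' = m \<and> a' = a - t \<or> m' = Suc m \<and> a' = 1 + a - t"
    and "0 \<le> a'" "a' < 1" "d' \<in> l2" "l2_normsq d' = a'" "w \<in> l2" "l2_normsq w = t"
    and "x \<in> l2 \<Longrightarrow> rank_one_op w x k + rank_one_op d' x k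
           = rank_one_op d x k + (\<Sum>j\<in>{m..<m'}. rank_one_op (e j) x k)"
    and "x \<in> l2 \<Longrightarrow> (cmod (l2_inner x d'))\<^sup>2
           \<le> max (1 - t) (sqrt t) * (cmod (l2_inner x d))\<^sup>2 + 2 * (\<Sum>j\<in>{m..<m'}. (cmod (l2_inner x (e j)))\<^sup>2)"
    by blast+
qed

context
  fixes \<xi> :: "nat \<Rightarrow> real"
  assumes \<xi>: "\<And>n. 0 < \<xi> n" "\<And>n. \<xi> n \<le> 1"
begin

lemma carry_state_Suc_eq:
  "carry_step e (\<xi> n) (carry_weight e \<xi> n, carry_used e \<xi> n, carry_vec e \<xi> n)
    = (carry_weight e \<xi> (Suc n), carry_used e \<xi> (Suc n), carry_vec e \<xi> (Suc n))"
  by (metis carry_state.simps(2) carry_state_eq)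

lemma carry_piece_state_eq:
  "carry_piece e (\<xi> n) (carry_weight e \<xi> n, carry_used e \<xi> n, carry_vec e \<xi> n) = piece e \<xi> n"
  by (simp add: piece_def carry_state_eq)

lemma carry_valid:
  shows "0 \<le> carry_weight e \<xi> n" "carry_weight e \<xi> n < 1"
    and "carry_vec e \<xi> n \<in> l2" "l2_normsq (carry_vec e \<xi> n) = carry_weight e \<xi> n"
proof (induction n)
  case 0
  show "0 \<le> carry_weight e \<xi> 0" "carry_weight e \<xi> 0 < 1" "carry_vec e \<xi> 0 \<in> l2"
    "l2_normsq (carry_vec e \<xi> 0) = carry_weight e \<xi> 0"
    by (simp_all add: carry_weight_def carry_vec_def l2_normsq_def)
next
  case (Suc n)
  note step = carry_step_properties[OF \<xi>(1,2) Suc carry_state_Suc_eq carry_piece_state_eq]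
  show "0 \<le> carry_weight e \<xi> (Suc n)" "carry_weight e \<xi> (Suc n) < 1" "carry_vec e \<xi> (Suc n) \<in> l2"
    "l2_normsq (carry_vec e \<xi> (Suc n)) = carry_weight e \<xi> (Suc n)"
    by (fact step(2-5))+
qed

lemmas carry_state_step = carry_step_properties[OF \<xi>(1,2) carry_valid carry_state_Suc_eq carry_piece_state_eq]

lemma piece_mem_l2: "piece e \<xi> n \<in> l2"
  and l2_normsq_piece: "l2_normsq (piece e \<xi> n) = \<xi> n"
  by (fact carry_state_step(6,7))+

lemma carry_used_Suc:
  "carry_used e \<xi> (Suc n) = carry_used e \<xi> n \<or> carry_used e \<xi> (Suc n) = Suc (carry_used e \<xi> n)"
  using carry_state_step(1) by blast

lemma carry_used_eq: "real (carry_used e \<xi> n) = carry_weight e \<xi> n + (\<Sum>i<n. \<xi> i)"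
proof (induction n)
  case 0
  then show ?case by (simp add: carry_used_def carry_weight_def)
next
  case (Suc n)
  then show ?case using carry_state_step(1)[of n] by auto
qed

lemma sum_pieces_add_carry_eq:
  assumes "x \<in> l2"
  shows "(\<Sum>i<n. rank_one_op (piece e \<xi> i) x k) + rank_one_op (carry_vec e \<xi> n) x k
    = (\<Sum>j<carry_used e \<xi> n. rank_one_op (e j) x k)"
proof (induction n)
  case 0
  then show ?case by (simp add: carry_used_def carry_vec_def rank_one_op_def)
next
  case (Suc n)
  let ?new = "\<Sum>j\<in>{carry_used e \<xi> n..<carry_used e \<xi> (Suc n)}. rank_one_op (e j) x k"
  have "(\<Sum>i<Suc n. rank_one_op (piece e \<xi> i) x k) + rank_one_op (carry_vec e \<xi> (Suc n)) x k
      = (\<Sum>i<n. rank_one_op (piece e \<xi> i) x k)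
        + (rank_one_op (piece e \<xi> n) x k + rank_one_op (carry_vec e \<xi> (Suc n)) x k)"
    by (simp add: add.assoc)
  also have "\<dots> = (\<Sum>j<carry_used e \<xi> n. rank_one_op (e j) x k) + ?new"
    using Suc carry_state_step(8)[OF assms, of n k] by (simp add: add.assoc)
  also have "\<dots> = (\<Sum>j<carry_used e \<xi> (Suc n). rank_one_op (e j) x k)"
    using carry_used_Suc[of n]
    by (auto simp: atLeast0LessThan[symmetric] sum.atLeastLessThan_concat)
  finally show ?case .
qed

context
  fixes A
  assumes A: "sot_sums (\<lambda>j. rank_one_op (e j)) A"
    and diverge: "filterlim (\<lambda>n. \<Sum>i<n. small_part \<xi> i) at_top sequentially"
begin

lemma carry_used_at_top: "filterlim (carry_used e \<xi>) at_top sequentially"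
proof -
  have "(\<Sum>i<n. small_part \<xi> i) \<le> real (carry_used e \<xi> n)" for n
  proof -
    have "(\<Sum>i<n. small_part \<xi> i) \<le> (\<Sum>i<n. \<xi> i)"
      using \<xi> by (intro sum_mono) (simp add: small_part_def less_imp_le)
    then show ?thesis
      using carry_used_eq[of n] carry_valid(1)[of n] by linarith
  qed
  then have "filterlim (\<lambda>n. real (carry_used e \<xi> n)) at_top sequentially"
    by (intro filterlim_at_top_mono[OF diverge] always_eventually) auto
  then show ?thesis
    by (simp add: filterlim_sequentially_iff_filterlim_real)
qed

lemma carry_vec_inner_tendsto_zero:
  assumes z: "z \<in> l2"
  shows "(\<lambda>n. (cmod (l2_inner z (carry_vec e \<xi> n)))\<^sup>2) \<longlonglongrightarrow> 0"
proof -
  define B where "B n = 2 * (\<Sum>j<carry_used e \<xi> n. (cmod (l2_inner z (e j)))\<^sup>2)" for n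
  have "incseq B"
  proof (rule incseq_SucI)
    show "B n \<le> B (Suc n)" for n
      using carry_used_Suc[of n] by (auto simp: B_def)
  qed
  moreover have "convergent B"
  proof -
    obtain L where "(\<lambda>m. \<Sum>j<m. (cmod (l2_inner z (e j)))\<^sup>2) \<longlonglongrightarrow> L"
      using bessel_partial_sums_convergent[OF e(1) A z] by (auto simp: convergent_def)
    then show ?thesis
      unfolding B_def convergent_def
      using tendsto_mult_left[OF filterlim_compose[OF _ carry_used_at_top]] by blast
  qed
  moreover have "(cmod (l2_inner z (carry_vec e \<xi> (Suc n))))\<^sup>2
      \<le> (1 - small_part \<xi> n / 2) * (cmod (l2_inner z (carry_vec e \<xi> n)))\<^sup>2 + (B (Suc n) - B n)" for n
  proof -
    have "max (1 - \<xi> n) (sqrt (\<xi> n)) \<le> 1 - small_part \<xi> n / 2"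
      using contraction_factor_le[of "\<xi> n"] \<xi>[of n] by (simp add: small_part_def)
    then have "max (1 - \<xi> n) (sqrt (\<xi> n)) * (cmod (l2_inner z (carry_vec e \<xi> n)))\<^sup>2
        \<le> (1 - small_part \<xi> n / 2) * (cmod (l2_inner z (carry_vec e \<xi> n)))\<^sup>2"
      by (rule mult_right_mono) simp
    moreover have "2 * (\<Sum>j\<in>{carry_used e \<xi> n..<carry_used e \<xi> (Suc n)}. (cmod (l2_inner z (e j)))\<^sup>2)
        = B (Suc n) - B n"
      using carry_used_Suc[of n] by (auto simp: B_def)
    ultimately show ?thesis
      using carry_state_step(9)[OF z, of n] by linarith
  qed
  moreover have "filterlim (\<lambda>n. \<Sum>i<n. small_part \<xi> i / 2) at_top sequentially"
    using filterlim_tendsto_pos_mult_at_top[OF tendsto_const[of "1/2"] _ diverge]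
    by (simp add: sum_divide_distrib[symmetric])
  ultimately show ?thesis
    using \<xi> by (intro tendsto_zero_of_perturbed_contraction) (auto simp: small_part_def less_imp_le)
qed

lemma partial_sum_error_le:
  assumes z: "z \<in> l2"
  shows "l2_norm (\<lambda>k. (\<Sum>j<n. rank_one_op (piece e \<xi> j) z k) - A z k)
    \<le> l2_norm (\<lambda>k. (\<Sum>j<carry_used e \<xi> n. rank_one_op (e j) z k) - A z k)
      + cmod (l2_inner z (carry_vec e \<xi> n))"
proof -
  let ?S = "\<lambda>k. \<Sum>j<carry_used e \<xi> n. rank_one_op (e j) z k" and ?d = "carry_vec e \<xi> n"
  have S: "?S \<in> l2"
    by (intro l2_sum rank_one_op_mem_l2 e) simp
  have Az: "A z \<in> l2"
    using A z by (simp add: sot_sums_def)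
  have split: "(\<lambda>k. (\<Sum>j<n. rank_one_op (piece e \<xi> j) z k) - A z k)
      = (\<lambda>k. (?S k - A z k) - rank_one_op ?d z k)"
    by (simp add: fun_eq_iff sum_pieces_add_carry_eq[OF z, where n = n, symmetric])
  have "l2_norm ?d \<le> 1"
    using carry_valid[of n] by (simp add: l2_norm_eq_sqrt_normsq)
  then have "l2_norm (rank_one_op ?d z) \<le> cmod (l2_inner z ?d)"
    unfolding rank_one_op_def l2_norm_scale[OF carry_valid(3)] by (simp add: mult_left_le)
  then show ?thesis
    unfolding split
    using l2_norm_triangle_diff[OF l2_diff[OF S Az] rank_one_op_mem_l2[OF carry_valid(3)[of n], of z]]
    by linarith
qed

lemma sot_sums_pieces: "sot_sums (\<lambda>j. rank_one_op (piece e \<xi> j)) A"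
  unfolding sot_sums_def
proof (intro ballI conjI)
  fix z
  assume z: "z \<in> l2"
  show Az: "A z \<in> l2"
    using A z by (simp add: sot_sums_def)
  have "(\<lambda>m. l2_norm (\<lambda>k. (\<Sum>j<m. rank_one_op (e j) z k) - A z k)) \<longlonglongrightarrow> 0"
    using A z by (simp add: sot_sums_def)
  from filterlim_compose[OF this carry_used_at_top]
  have head: "(\<lambda>n. l2_norm (\<lambda>k. (\<Sum>j<carry_used e \<xi> n. rank_one_op (e j) z k) - A z k)) \<longlonglongrightarrow> 0" .
  have "(\<lambda>n. sqrt ((cmod (l2_inner z (carry_vec e \<xi> n)))\<^sup>2)) \<longlonglongrightarrow> sqrt 0"
    by (intro tendsto_real_sqrt carry_vec_inner_tendsto_zero z)
  then have rest: "(\<lambda>n. cmod (l2_inner z (carry_vec e \<xi> n))) \<longlonglongrightarrow> 0"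
    by simp
  have "0 \<le> l2_norm (\<lambda>k. (\<Sum>j<n. rank_one_op (piece e \<xi> j) z k) - A z k)" for n
    by (intro l2_norm_nonneg l2_diff l2_sum rank_one_op_mem_l2 piece_mem_l2 Az) simp
  with partial_sum_error_le[OF z]
  show "(\<lambda>n. l2_norm (\<lambda>k. (\<Sum>j<n. rank_one_op (piece e \<xi> j) z k) - A z k)) \<longlonglongrightarrow> 0"
    by (intro Lim_null_comparison[OF _ tendsto_add[OF head rest, simplified]] always_eventually allI)
      simp
qed

end

end

end

lemma Adm_if_rank_one_decomposition:
  assumes w: "\<And>j. w j \<in> l2" "\<And>j. l2_normsq (w j) = \<xi> j"
    and \<xi>: "\<And>j. 0 < \<xi> j" "bounded (range \<xi>)"
    and sums: "sot_sums (\<lambda>j. rank_one_op (w j)) A"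
  shows "\<xi> \<in> Adm A"
proof -
  define u where "u j = (\<lambda>k. of_real (1 / sqrt (\<xi> j)) * w j k)" for j
  have u: "u j \<in> l2" "l2_norm (u j) = 1" for j
  proof -
    show "u j \<in> l2"
      unfolding u_def by (rule l2_scale[OF w(1)])
    show "l2_norm (u j) = 1"
      unfolding u_def l2_norm_scale[OF w(1)] l2_norm_eq_sqrt_normsq[of "w j"] w(2) norm_of_real
      using \<xi>(1)[of j] by simp
  qed
  have "of_real (\<xi> j) * rank_one_op (u j) x k = rank_one_op (w j) x k" if "x \<in> l2" for j x k
  proof -
    have "of_real (\<xi> j) * (of_real (1 / sqrt (\<xi> j)) * of_real (1 / sqrt (\<xi> j))) = (1 :: complex)"
      using \<xi>(1)[of j] by (simp flip: of_real_mult)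
    moreover have "l2_inner x (u j) = of_real (1 / sqrt (\<xi> j)) * l2_inner x (w j)"
      unfolding u_def using w(1) that by (simp only: l2_inner_scale_right complex_cnj_complex_of_real)
    moreover have "X * (C * p * (C * q)) = (X * (C * C)) * (p * q)" for X C p q :: complex
      by algebra
    ultimately show ?thesis
      unfolding rank_one_op_def by (simp only: u_def mult_1_left)
  qed
  then have "sot_sums (\<lambda>j x k. of_real (\<xi> j) * rank_one_op (u j) x k) A"
    using sums by (subst sot_sums_cong) auto
  moreover have "rank_one_proj (rank_one_op (u j))" for j
    unfolding rank_one_proj_def rank_one_op_def using u by blast
  ultimately show ?thesis
    unfolding Adm_def using \<xi> by (auto intro!: exI[of _ "\<lambda>j. rank_one_op (u j)"] less_imp_le)
qed

theorem Adm_if_small_part_diverges: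
  assumes E: "\<forall>j. rank_one_proj (E j)" and A: "sot_sums E A"
    and \<xi>: "\<And>n. 0 < \<xi> n" "\<And>n. \<xi> n \<le> 1"
    and diverge: "filterlim (\<lambda>n. \<Sum>i<n. small_part \<xi> i) at_top sequentially"
  shows "\<xi> \<in> Adm A"
proof -
  from E have "\<forall>j. \<exists>v. v \<in> l2 \<and> l2_norm v = 1 \<and> (\<forall>x\<in>l2. E j x = rank_one_op v x)"
    unfolding rank_one_proj_def rank_one_op_def by blast
  then obtain e where e: "\<And>j. e j \<in> l2" "\<And>j. l2_norm (e j) = 1"
    and E_eq: "\<And>j x. x \<in> l2 \<Longrightarrow> E j x = rank_one_op (e j) x"
    by metis
  have e_normsq: "l2_normsq (e j) = 1" for j
    using e by (simp add: l2_normsq_eq_square)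
  have "sot_sums (\<lambda>j. rank_one_op (e j)) A"
    using A E_eq by (subst (asm) sot_sums_cong) auto
  note pieces = sot_sums_pieces[where e = e and \<xi> = \<xi>, OF e(1) e_normsq \<xi> this diverge]
  have "bounded (range \<xi>)"
    using \<xi> by (intro boundedI[of _ 1]) (auto simp: less_imp_le)
  then show ?thesis
    using Adm_if_rank_one_decomposition[OF piece_mem_l2 l2_normsq_piece \<xi>(1) _ pieces]
      e(1) e_normsq \<xi> by blast
qed

theorem lemma3p4:
  fixes E :: "nat \<Rightarrow> (nat \<Rightarrow> complex) \<Rightarrow> (nat \<Rightarrow> complex)"
    and A :: "(nat \<Rightarrow> complex) \<Rightarrow> (nat \<Rightarrow> complex)"
    and \<mu> lam :: "nat \<Rightarrow> real" and M N :: enat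
    and \<xi> :: "nat \<Rightarrow> real" and \<sigma> :: "nat \<Rightarrow> nat + nat"
  assumes E_proj: "\<forall>j. rank_one_proj (E j)"
    and A_sum: "sot_sums E A"
    and \<mu>_range: "\<forall>j. enat j < M \<longrightarrow> 0 < \<mu> j \<and> \<mu> j \<le> 1/2"
    and lam_range: "\<forall>j. enat j < N \<longrightarrow> 0 < lam j \<and> lam j < 1/2"
    and \<sigma>_bij: "bij_betw \<sigma> UNIV ({j. enat j < M} <+> {j. enat j < N})"
    and \<xi>_def: "\<forall>n. \<xi> n = (case \<sigma> n of Inl j \<Rightarrow> \<mu> j | Inr j \<Rightarrow> 1 - lam j)"
    and \<mu>_div: "(\<Sum>\<^sub>\<infinity>j\<in>{j. enat j < M}. ennreal (\<mu> j)) = \<infinity>"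
  shows "\<xi> \<in> Adm A"
proof (rule Adm_if_small_part_diverges[OF E_proj A_sum])
  have \<sigma>_mem: "\<sigma> n \<in> {j. enat j < M} <+> {j. enat j < N}" for n
    using \<sigma>_bij by (auto simp: bij_betw_def)
  show \<xi>_pos: "0 < \<xi> n" and "\<xi> n \<le> 1" for n
    using \<sigma>_mem[of n] \<xi>_def \<mu>_range lam_range by (auto split: sum.split)
  \<comment> \<open>the entries \<open>1 - lam j\<close> exceed \<open>1/2\<close>, so the small part of \<open>\<xi>\<close> is made of the \<open>\<mu> j\<close>\<close>
  have small: "small_part \<xi> n = (case \<sigma> n of Inl j \<Rightarrow> \<mu> j | Inr _ \<Rightarrow> 0)" for n
    using \<sigma>_mem[of n] \<xi>_def \<mu>_range lam_range by (auto simp: small_part_def split: sum.split)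
  have "ennreal (small_part \<xi> n) = (case \<sigma> n of Inl j \<Rightarrow> ennreal (\<mu> j) | Inr _ \<Rightarrow> 0)" for n
    unfolding small by (simp split: sum.split)
  then have "(\<Sum>\<^sub>\<infinity>n. ennreal (small_part \<xi> n)) = (\<Sum>\<^sub>\<infinity>j\<in>{j. enat j < M}. ennreal (\<mu> j))"
    using infsum_case_sum_Inl[OF \<sigma>_bij, of "\<lambda>j. ennreal (\<mu> j)"] by simp
  then show "filterlim (\<lambda>n. \<Sum>i<n. small_part \<xi> i) at_top sequentially"
    using \<mu>_div \<xi>_pos
    by (intro partial_sums_at_top_if_ennreal_infsum_infinite) (auto simp: small_part_def less_imp_le)
qed

end
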